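(* Let $S$ be a random variable (the stimulus) taking values in a finite set $\mathcal{S}$ with $P(s)>0$ for all $s\in\mathcal{S}$, and let $\mathbf{R}=(R_1,\ldots,R_N)$ be a random vector (the neural response) taking values in a finite product set, with joint distribution $P(s,\mathbf{r})$. Let $\mathbf{R}^{NI}$ denote the surrogate response whose conditional distribution given $S=s$ is $P^{NI}(\mathbf{r}|s)=\prod_{n=1}^N P(r_n|s)$ (with $S$ keeping its marginal distribution). Then: (i) there exist such $S$ and $\mathbf{R}$ for which there is no stimulus-independent stochastic code mapping $\mathbf{R}$ into $\mathbf{R}^{NI}$, i.e. no transition probabilities $Q(\mathbf{r}'|\mathbf{r})\ge 0$ with $\sum_{\mathbf{r}'}Q(\mathbf{r}'|\mathbf{r})=1$ for all $\mathbf{r}$ such that $P^{NI}(\mathbf{r}'|s)=\sum_{\mathbf{r}}P(\mathbf{r}|s)\,Q(\mathbf{r}'|\mathbf{r})$ for all $s$ and $\mathbf{r}'$; (ii) if $\mathbf{R}$ is noise correlated, i.e. $P(\mathbf{r}|s)\neq P^{NI}(\mathbf{r}|s)$ for some $s$ and $\mathbf{r}$, then there is no deterministic stimulus-independent function $f$ (reduced code) such that $P(f(\mathbf{R})=\mathbf{r}'\,|\,S=s)=P^{NI}(\mathbf{r}'|s)$ for all $s$ and $\mathbf{r}'$.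
   Context: A stochastic code is a code obtained from another code through stimulus-independent transition probabilities $Q(\mathbf{r}'|\mathbf{r})$ as described; a reduced code is the special case of a deterministic stimulus-independent function. The responses $R_n$ are noise independent if $P(\mathbf{r}|s)=P^{NI}(\mathbf{r}|s)$ for all $\mathbf{r},s$, and noise correlated otherwise. *)

theory Defs
  imports Complex_Main
begin

text \<open>Responses: vectors r :: 'n \<Rightarrow> 'a, where 'n (finite)
indexes the N neurons and 'a (finite) contains the response values, so the response set
is the finite product set 'a^N.\<close>

definition valid_joint :: "('s::finite \<Rightarrow> ('n::finite \<Rightarrow> 'a::finite) \<Rightarrow> real) \<Rightarrow> bool" where
  "valid_joint p \<longleftrightarrow> (\<forall>s r. 0 \<le> p s r) \<and> (\<Sum>s\<in>UNIV. \<Sum>r\<in>UNIV. p s r) = 1"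

definition pS :: "('s::finite \<Rightarrow> ('n::finite \<Rightarrow> 'a::finite) \<Rightarrow> real) \<Rightarrow> 's \<Rightarrow> real" where
  "pS p s = (\<Sum>r\<in>UNIV. p s r)"

definition cond :: "('s::finite \<Rightarrow> ('n::finite \<Rightarrow> 'a::finite) \<Rightarrow> real) \<Rightarrow> 's \<Rightarrow> ('n \<Rightarrow> 'a) \<Rightarrow> real" where
  "cond p s r = p s r / pS p s"

definition marg :: "('s::finite \<Rightarrow> ('n::finite \<Rightarrow> 'a::finite) \<Rightarrow> real) \<Rightarrow> 'n \<Rightarrow> 's \<Rightarrow> 'a \<Rightarrow> real" where
  "marg p n s x = (\<Sum>r\<in>{r. r n = x}. cond p s r)"

definition PNI :: "('s::finite \<Rightarrow> ('n::finite \<Rightarrow> 'a::finite) \<Rightarrow> real) \<Rightarrow> 's \<Rightarrow> ('n \<Rightarrow> 'a) \<Rightarrow> real" where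
  "PNI p s r = (\<Prod>n\<in>UNIV. marg p n s (r n))"

text \<open>Stimulus-independent transition probabilities Q(r'|r), written Q r r'.\<close>
definition stochastic_map :: "(('n::finite \<Rightarrow> 'a::finite) \<Rightarrow> ('n \<Rightarrow> 'a) \<Rightarrow> real) \<Rightarrow> bool" where
  "stochastic_map Q \<longleftrightarrow> (\<forall>r r'. 0 \<le> Q r r') \<and> (\<forall>r. (\<Sum>r'\<in>UNIV. Q r r') = 1)"

definition noise_correlated :: "('s::finite \<Rightarrow> ('n::finite \<Rightarrow> 'a::finite) \<Rightarrow> real) \<Rightarrow> bool" where
  "noise_correlated p \<longleftrightarrow> (\<exists>s r. cond p s r \<noteq> PNI p s r)"

end

theory Submission
  imports Defs "HOL-Library.FuncSet"
begin

text \<open>(i) Take two neurons that always both fire under the stimulus True and that under the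
stimulus False are perfectly correlated fair coins.  A stimulus-independent Q reproducing
P^NI(.|True) must map the all-firing response to itself with probability 1, so under False it
produces that response with probability at least 1/2, whereas P^NI(.|False) gives it 1/4.

(ii) Let c = P(.|s) and let u = P^NI(.|s) be the product of its single-neuron marginals.  The
cross entropy \<Sum> c ln u depends only on these marginals, which u shares with c, so it equals
\<Sum> u ln u.  If a deterministic f pushes c forward to u, then c(r) \<le> u(f r), hence
\<Sum> c ln c \<le> \<Sum> c ln (u \<circ> f) = \<Sum> u ln u = \<Sum> c ln u, and the equality case of Gibbs'
inequality forces c = u.\<close>

lemma sum_mult_comp_eq_sum_fibres:
  fixes c :: "'i::finite \<Rightarrow> 'b::comm_semiring_1" and f :: "'i \<Rightarrow> 'j::finite"
  shows "(\<Sum>r\<in>UNIV. c r * h (f r)) = (\<Sum>y\<in>UNIV. (\<Sum>r\<in>{r. f r = y}. c r) * h y)"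
proof -
  have "(\<Sum>r\<in>UNIV. c r * h (f r)) = (\<Sum>y\<in>UNIV. \<Sum>r\<in>{r. f r = y}. c r * h (f r))"
    using sum.group[of "UNIV :: 'i set" "UNIV :: 'j set" f "\<lambda>r. c r * h (f r)"] by simp
  also have "\<dots> = (\<Sum>y\<in>UNIV. (\<Sum>r\<in>{r. f r = y}. c r) * h y)"
    by (auto simp: sum_distrib_right intro!: sum.cong)
  finally show ?thesis .
qed

lemma sum_eq_sum_fibres:
  fixes c :: "'i::finite \<Rightarrow> 'b::comm_semiring_1" and f :: "'i \<Rightarrow> 'j::finite"
  shows "(\<Sum>r\<in>UNIV. c r) = (\<Sum>y\<in>UNIV. \<Sum>r\<in>{r. f r = y}. c r)"
  using sum_mult_comp_eq_sum_fibres[of c "\<lambda>_. 1" f] by simp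

lemma mult_ln_div_le:
  fixes c u :: real
  assumes "0 < c" "0 < u"
  shows "c * ln (u / c) \<le> u - c"
proof -
  have "c * ln (u / c) \<le> c * (u / c - 1)"
    using assms by (intro mult_left_mono ln_le_minus_one) auto
  also have "\<dots> = u - c" using assms by (simp add: field_simps)
  finally show ?thesis .
qed

lemma mult_ln_div_eq_imp_eq:
  fixes c u :: real
  assumes "0 < c" "0 < u" and "c * ln (u / c) = u - c"
  shows "u = c"
proof -
  have "ln (u / c) = u / c - 1" using assms by (simp add: field_simps)
  then have "u / c = 1" using assms by (intro ln_eq_minus_one) auto
  then show ?thesis using assms by simp
qed

lemma gibbs_equality:
  fixes c u :: "'i \<Rightarrow> real"
  assumes "finite A"
    and c_nonneg: "\<And>r. r \<in> A \<Longrightarrow> 0 \<le> c r" and u_nonneg: "\<And>r. r \<in> A \<Longrightarrow> 0 \<le> u r"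
    and "sum c A = 1" "sum u A = 1"
    and supp: "\<And>r. r \<in> A \<Longrightarrow> 0 < c r \<Longrightarrow> 0 < u r"
    and le: "(\<Sum>r\<in>A. c r * ln (c r)) \<le> (\<Sum>r\<in>A. c r * ln (u r))"
  shows "r \<in> A \<Longrightarrow> c r = u r"
proof -
  define d where "d r = (u r - c r) - c r * (ln (u r) - ln (c r))" for r
  have d_eq: "d r = (u r - c r) - c r * ln (u r / c r)" if "r \<in> A" "0 < c r" for r
    using that supp[OF that] by (simp add: d_def ln_div)
  have d_nonneg: "0 \<le> d r" if "r \<in> A" for r
  proof (cases "c r = 0")
    case True
    then show ?thesis using u_nonneg[OF that] by (simp add: d_def)
  next
    case False
    then have "0 < c r" using c_nonneg[OF that] by simp
    then show ?thesis using d_eq[OF that] mult_ln_div_le[OF _ supp[OF that]] by simp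
  qed
  have "sum d A = (sum u A - sum c A) - ((\<Sum>r\<in>A. c r * ln (u r)) - (\<Sum>r\<in>A. c r * ln (c r)))"
    by (simp add: d_def sum_subtractf right_diff_distrib)
  also have "\<dots> \<le> 0" using assms by simp
  finally have "sum d A = 0" using sum_nonneg[of A d] d_nonneg by (meson order_antisym)
  then have d_zero: "d r = 0" if "r \<in> A" for r
    using that sum_nonneg_eq_0_iff[OF \<open>finite A\<close>] d_nonneg by blast
  show "c r = u r" if "r \<in> A"
  proof (cases "c r = 0")
    case True
    then show ?thesis using d_zero[OF that] by (simp add: d_def)
  next
    case False
    then have "0 < c r" using c_nonneg[OF that] by simp
    moreover have "c r * ln (u r / c r) = u r - c r"
      using d_zero[OF that] d_eq[OF that \<open>0 < c r\<close>] by simp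
    ultimately show ?thesis using mult_ln_div_eq_imp_eq supp[OF that] by metis
  qed
qed

lemma sum_mult_ln_prod_marginals:
  fixes w :: "('n::finite \<Rightarrow> 'a::finite) \<Rightarrow> real" and m :: "'n \<Rightarrow> 'a \<Rightarrow> real"
  assumes marginal: "\<And>n x. (\<Sum>r\<in>{r. r n = x}. w r) = m n x"
    and supp: "\<And>r n. w r \<noteq> 0 \<Longrightarrow> m n (r n) \<noteq> 0"
  shows "(\<Sum>r\<in>UNIV. w r * ln (\<Prod>n\<in>UNIV. m n (r n)))
           = (\<Sum>n\<in>UNIV. \<Sum>x\<in>UNIV. m n x * ln (m n x))"
proof -
  have "(\<Sum>r\<in>UNIV. w r * ln (\<Prod>n\<in>UNIV. m n (r n)))
          = (\<Sum>r\<in>UNIV. w r * (\<Sum>n\<in>UNIV. ln (m n (r n))))"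
  proof (rule sum.cong)
    show "w r * ln (\<Prod>n\<in>UNIV. m n (r n)) = w r * (\<Sum>n\<in>UNIV. ln (m n (r n)))" for r
      using supp[of r] by (cases "w r = 0") (simp_all add: ln_prod)
  qed simp
  also have "\<dots> = (\<Sum>n\<in>UNIV. \<Sum>r\<in>UNIV. w r * ln (m n (r n)))"
    unfolding sum_distrib_left by (rule sum.swap)
  also have "\<dots> = (\<Sum>n\<in>UNIV. \<Sum>x\<in>UNIV. m n x * ln (m n x))"
    using sum_mult_comp_eq_sum_fibres[of w "ln \<circ> m _" "\<lambda>r. r _"] by (simp add: marginal)
  finally show ?thesis .
qed

lemma sum_prod_coordinate_fibre:
  fixes m :: "'n::finite \<Rightarrow> 'a::finite \<Rightarrow> real"
  assumes "\<And>n. (\<Sum>x\<in>UNIV. m n x) = 1"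
  shows "(\<Sum>r\<in>{r. r n0 = x}. \<Prod>n\<in>UNIV. m n (r n)) = m n0 x"
proof -
  define B where "B n = (if n = n0 then {x} else UNIV)" for n
  have "PiE UNIV B = {r. r n0 = x}"
    by (auto simp: PiE_UNIV_domain Pi_iff B_def) (metis singletonD)
  then have "(\<Sum>r\<in>{r. r n0 = x}. \<Prod>n\<in>UNIV. m n (r n)) = (\<Prod>n\<in>UNIV. \<Sum>y\<in>B n. m n y)"
    by (simp add: prod_sum_PiE)
  also have "\<dots> = (\<Prod>n\<in>UNIV. if n = n0 then m n0 x else 1)"
    by (intro prod.cong) (auto simp: B_def assms)
  also have "\<dots> = m n0 x" by (simp add: prod.delta)
  finally show ?thesis .
qed

lemma pushforward_eq_prod_marginals_imp_eq:
  fixes c :: "('n::finite \<Rightarrow> 'a::finite) \<Rightarrow> real" and f :: "('n \<Rightarrow> 'a) \<Rightarrow> ('n \<Rightarrow> 'a)"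
  defines "m n x \<equiv> \<Sum>r\<in>{r. r n = x}. c r"
  assumes c_nonneg: "\<And>r. 0 \<le> c r" and c_total: "(\<Sum>r\<in>UNIV. c r) = 1"
    and push: "\<And>r'. (\<Sum>r\<in>{r. f r = r'}. c r) = (\<Prod>n\<in>UNIV. m n (r' n))"
  shows "c r = (\<Prod>n\<in>UNIV. m n (r n))"
proof -
  define u where "u r = (\<Prod>n\<in>UNIV. m n (r n))" for r
  have c_le_m: "c r \<le> m n (r n)" for r n
    unfolding m_def using c_nonneg by (auto intro: member_le_sum)
  have c_supp: "m n (r n) \<noteq> 0" if "c r \<noteq> 0" for r n
    using c_le_m[of r n] c_nonneg[of r] that by linarith
  have m_nonneg: "0 \<le> m n x" for n x
    unfolding m_def using c_nonneg by (simp add: sum_nonneg)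
  have m_total: "(\<Sum>x\<in>UNIV. m n x) = 1" for n
    using c_total sum_eq_sum_fibres[of c "\<lambda>r. r n"] by (simp add: m_def)
  have c_le_u_f: "c r \<le> u (f r)" for r
    unfolding u_def push[symmetric] using c_nonneg by (auto intro: member_le_sum)
  have "(\<Sum>r\<in>UNIV. c r * ln (c r)) \<le> (\<Sum>r\<in>UNIV. c r * ln (u (f r)))"
  proof (intro sum_mono)
    fix r
    show "c r * ln (c r) \<le> c r * ln (u (f r))"
      using c_nonneg[of r] c_le_u_f[of r] by (cases "c r = 0") (auto intro: mult_left_mono)
  qed
  also have "\<dots> = (\<Sum>r\<in>UNIV. u r * ln (u r))"
    using sum_mult_comp_eq_sum_fibres[of c "\<lambda>y. ln (u y)" f] by (simp add: push u_def)
  also have "\<dots> = (\<Sum>n\<in>UNIV. \<Sum>x\<in>UNIV. m n x * ln (m n x))"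
    unfolding u_def by (rule sum_mult_ln_prod_marginals) (simp_all add: sum_prod_coordinate_fibre m_total)
  also have "\<dots> = (\<Sum>r\<in>UNIV. c r * ln (u r))"
    unfolding u_def using c_supp by (intro sum_mult_ln_prod_marginals[symmetric]) (simp_all add: m_def)
  finally have le: "(\<Sum>r\<in>UNIV. c r * ln (c r)) \<le> (\<Sum>r\<in>UNIV. c r * ln (u r))" .
  show ?thesis
    unfolding u_def[symmetric]
  proof (rule gibbs_equality[OF finite_UNIV _ _ c_total _ _ le])
    show "0 \<le> u r" for r unfolding u_def using m_nonneg by (simp add: prod_nonneg)
    show "sum u UNIV = 1"
      using c_total sum_eq_sum_fibres[of c f] by (simp add: push u_def)
    show "0 < u r" if "0 < c r" for r
      unfolding u_def using c_le_m that by (intro prod_pos) (auto intro: less_le_trans)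
  qed (simp_all add: c_nonneg)
qed

lemma cond_nonneg: "valid_joint p \<Longrightarrow> 0 \<le> cond p s r"
  by (simp add: cond_def valid_joint_def pS_def sum_nonneg)

lemma sum_cond_eq_1: "pS p s \<noteq> 0 \<Longrightarrow> (\<Sum>r\<in>UNIV. cond p s r) = 1"
  by (simp add: cond_def pS_def sum_divide_distrib[symmetric])

lemma PNI_eq_prod_marginals: "PNI p s r = (\<Prod>n\<in>UNIV. \<Sum>r'\<in>{r'. r' n = r n}. cond p s r')"
  by (simp add: PNI_def marg_def)

lemma reduced_code_to_PNI_imp_cond_eq_PNI:
  fixes p :: "'s::finite \<Rightarrow> ('n::finite \<Rightarrow> 'a::finite) \<Rightarrow> real"
    and f :: "('n \<Rightarrow> 'a) \<Rightarrow> ('n \<Rightarrow> 'a)"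
  assumes "valid_joint p" and "pS p s > 0"
    and "\<And>r'. (\<Sum>r\<in>{r. f r = r'}. cond p s r) = PNI p s r'"
  shows "cond p s r = PNI p s r"
  using assms unfolding PNI_eq_prod_marginals
  by (intro pushforward_eq_prod_marginals_imp_eq) (simp_all add: cond_nonneg sum_cond_eq_1)

definition agreeing_pair_joint :: "bool \<Rightarrow> (bool \<Rightarrow> bool) \<Rightarrow> real" where
  "agreeing_pair_joint s r =
     (if s then (if r = (\<lambda>_. True) then 1/2 else 0)
      else (if r = (\<lambda>_. True) then 1/4 else 0) + (if r = (\<lambda>_. False) then 1/4 else 0))"

lemma pS_agreeing_pair_joint: "pS agreeing_pair_joint s = 1/2"
  by (cases s) (simp_all add: pS_def agreeing_pair_joint_def sum.distrib)

lemma valid_joint_agreeing_pair_joint: "valid_joint agreeing_pair_joint"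
proof -
  have "(\<Sum>s\<in>UNIV. \<Sum>r\<in>UNIV. agreeing_pair_joint s r) = (\<Sum>s\<in>UNIV. pS agreeing_pair_joint s)"
    by (simp add: pS_def)
  then show ?thesis
    by (simp add: valid_joint_def pS_agreeing_pair_joint UNIV_bool) (simp add: agreeing_pair_joint_def)
qed

lemma cond_agreeing_pair_joint:
  "cond agreeing_pair_joint s r =
     (if s then (if r = (\<lambda>_. True) then 1 else 0)
      else (if r = (\<lambda>_. True) then 1/2 else 0) + (if r = (\<lambda>_. False) then 1/2 else 0))"
  by (simp add: cond_def pS_agreeing_pair_joint agreeing_pair_joint_def)

lemma PNI_agreeing_pair_joint_all_True:
  "PNI agreeing_pair_joint True (\<lambda>_. True) = 1"
  "PNI agreeing_pair_joint False (\<lambda>_. True) = 1/4"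
  by (simp_all add: PNI_def marg_def cond_agreeing_pair_joint sum.distrib UNIV_bool)

lemma no_stochastic_code_to_PNI_agreeing_pair:
  "\<not> (\<exists>Q. stochastic_map Q \<and>
        (\<forall>s r'. PNI agreeing_pair_joint s r' = (\<Sum>r\<in>UNIV. cond agreeing_pair_joint s r * Q r r')))"
proof
  assume "\<exists>Q. stochastic_map Q \<and>
            (\<forall>s r'. PNI agreeing_pair_joint s r' = (\<Sum>r\<in>UNIV. cond agreeing_pair_joint s r * Q r r'))"
  then obtain Q where "stochastic_map Q"
    and code: "\<And>s r'. PNI agreeing_pair_joint s r' = (\<Sum>r\<in>UNIV. cond agreeing_pair_joint s r * Q r r')"
    by blast
  define on where "on = (\<lambda>_::bool. True)"
  define off where "off = (\<lambda>_::bool. False)"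
  have if_times: "(if P then b else 0) * x = (if P then b * x else 0)" for P and b x :: real
    by simp
  have "1 = Q on on"
    using code[of True on]
    by (simp add: PNI_agreeing_pair_joint_all_True cond_agreeing_pair_joint on_def if_times)
  moreover have "1/4 = Q on on / 2 + Q off on / 2"
    using code[of False on]
    by (simp add: PNI_agreeing_pair_joint_all_True cond_agreeing_pair_joint on_def off_def
        distrib_right sum.distrib if_times)
  moreover have "0 \<le> Q off on" using \<open>stochastic_map Q\<close> by (simp add: stochastic_map_def)
  ultimately show False by linarith
qed

theorem theorem1:
  shows "(\<exists>p :: bool \<Rightarrow> (bool \<Rightarrow> bool) \<Rightarrow> real.
            valid_joint p \<and> (\<forall>s. pS p s > 0) \<and>
            \<not> (\<exists>Q. stochastic_map Q \<and>
                   (\<forall>s r'. PNI p s r' = (\<Sum>r\<in>UNIV. cond p s r * Q r r'))))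
       \<and> (\<forall>p :: 's::finite \<Rightarrow> ('n::finite \<Rightarrow> 'a::finite) \<Rightarrow> real.
            valid_joint p \<and> (\<forall>s. pS p s > 0) \<and> noise_correlated p \<longrightarrow>
            \<not> (\<exists>f :: ('n \<Rightarrow> 'a) \<Rightarrow> ('n \<Rightarrow> 'a).
                   \<forall>s r'. (\<Sum>r\<in>{r. f r = r'}. cond p s r) = PNI p s r'))"
proof (intro conjI allI impI)
  show "\<exists>p :: bool \<Rightarrow> (bool \<Rightarrow> bool) \<Rightarrow> real.
          valid_joint p \<and> (\<forall>s. pS p s > 0) \<and>
          \<not> (\<exists>Q. stochastic_map Q \<and> (\<forall>s r'. PNI p s r' = (\<Sum>r\<in>UNIV. cond p s r * Q r r')))"
    using valid_joint_agreeing_pair_joint no_stochastic_code_to_PNI_agreeing_pair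
    by (intro exI[of _ agreeing_pair_joint]) (simp add: pS_agreeing_pair_joint)
next
  fix p :: "'s::finite \<Rightarrow> ('n::finite \<Rightarrow> 'a::finite) \<Rightarrow> real"
  assume "valid_joint p \<and> (\<forall>s. pS p s > 0) \<and> noise_correlated p"
  then show "\<not> (\<exists>f :: ('n \<Rightarrow> 'a) \<Rightarrow> ('n \<Rightarrow> 'a).
                 \<forall>s r'. (\<Sum>r\<in>{r. f r = r'}. cond p s r) = PNI p s r')"
    unfolding noise_correlated_def using reduced_code_to_PNI_imp_cond_eq_PNI by blast
qed

end
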